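(* Let $n\geq 1$ and $x_1,\dots,x_n\in(0,\tfrac12]$. With $A_n,G_n,A'_n,G'_n$ as defined in the context, $$\left(\frac{A'_n}{G'_n}\right)^{A'_n+G'_n}\leq \left(\frac{A_n}{G_n}\right)^{A_n+G_n} \qquad\text{and}\qquad \left(\frac{A'_n}{G'_n}\right)^{A_n-G_n}\leq \left(\frac{A_n}{G_n}\right)^{A'_n-G'_n},$$ with equality in each if and only if $x_1=\cdots=x_n$.
   Context: $A_n=\frac1n\sum_{i=1}^n x_i$ and $G_n=\prod_{i=1}^n x_i^{1/n}$ are the arithmetic and geometric means of $x_1,\dots,x_n$; $A'_n=\frac1n\sum_{i=1}^n(1-x_i)$ and $G'_n=\prod_{i=1}^n(1-x_i)^{1/n}$ are the arithmetic and geometric means of $1-x_1,\dots,1-x_n$. *)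

theory Defs
  imports Complex_Main
begin

definition AM :: "nat \<Rightarrow> (nat \<Rightarrow> real) \<Rightarrow> real" where
  "AM n x = (\<Sum>i=1..n. x i) / real n"

definition GM :: "nat \<Rightarrow> (nat \<Rightarrow> real) \<Rightarrow> real" where
  "GM n x = (\<Prod>i=1..n. x i powr (1 / real n))"

end

theory Submission
  imports Defs
begin

(* Everything is controlled by the sum of squared deviations V = \<Sum> (x\<^sub>i - A)\<^sup>2, which does not
   change under x \<mapsto> 1 - x. Comparing the logarithm with its second order expansion gives
   V/(2nM) \<le> A - G \<le> V/(2nm) whenever all entries lie in [m, M]; as x\<^sub>i \<le> 1/2 \<le> 1 - x\<^sub>i this
   yields A' - G' \<le> A - G, besides A < A' and G \<le> G'. The first inequality then
   follows from (A + G) ln (A/G) = (A - G) \<chi>(A/G) with \<chi>(t) = (t + 1) ln t / (t - 1) increasing,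
   the second from the decrease of the chord slopes (ln b - ln a)/(b - a) of the concave logarithm. *)

lemma ln_less_half_diff_inverse:
  fixes t :: real assumes "1 < t"
  shows "ln t < (t - 1/t) / 2"
proof -
  have "(\<lambda>u. (u - 1/u)/2 - ln u) 1 < (\<lambda>u. (u - 1/u)/2 - ln u) t"
  proof (rule DERIV_pos_imp_increasing_open[OF assms])
    fix u :: real assume u: "1 < u" "u < t"
    have "DERIV (\<lambda>u. (u - 1/u)/2 - ln u) u :> (1 - 1/u)^2 / 2"
      using u by (auto intro!: derivative_eq_intros simp: field_simps power2_eq_square)
    moreover have "(1 - 1/u)^2 / 2 > 0" using u by simp
    ultimately show "\<exists>y. DERIV (\<lambda>u. (u - 1/u)/2 - ln u) u :> y \<and> y > 0" by blast
  next
    show "continuous_on {1..t} (\<lambda>u. (u - 1/u)/2 - ln u)"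
      by (intro continuous_intros) auto
  qed
  then show ?thesis by simp
qed

lemma ln_le_half_diff_inverse:
  fixes t :: real assumes "1 \<le> t"
  shows "ln t \<le> (t - 1/t) / 2"
  using ln_less_half_diff_inverse[of t] assms by (cases "t = 1") auto

lemma ln_ge_half_diff_inverse:
  fixes t :: real assumes "0 < t" "t \<le> 1"
  shows "(t - 1/t) / 2 \<le> ln t"
  using ln_le_half_diff_inverse[of "1/t"] assms by (simp add: ln_div)

lemma ln_taylor2_gap_antimono:
  fixes s t :: real assumes "0 < s" "s \<le> t"
  shows "(t - 1) - (t - 1)^2/2 - ln t \<le> (s - 1) - (s - 1)^2/2 - ln s"
proof (rule DERIV_nonpos_imp_nonincreasing[OF assms(2)])
  fix u :: real assume "s \<le> u" "u \<le> t"
  then have u: "0 < u" using assms by simp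
  have "DERIV (\<lambda>u. (u - 1) - (u - 1)^2/2 - ln u) u :> - ((u - 1)^2 / u)"
    using u by (auto intro!: derivative_eq_intros simp: field_simps power2_eq_square)
  moreover have "- ((u - 1)^2 / u) \<le> 0" using u by simp
  ultimately show "\<exists>y. DERIV (\<lambda>u. (u - 1) - (u - 1)^2/2 - ln u) u :> y \<and> y \<le> 0" by blast
qed

lemma ln_deviation_bounds:
  fixes t :: real assumes "0 < t"
  shows "(t - 1)^2 / (2 * max t 1) \<le> t - 1 - ln t"
    and "t - 1 - ln t \<le> (t - 1)^2 / (2 * min t 1)"
proof -
  have half: "(t - 1)^2 / (2 * t) = t - 1 - (t - 1/t) / 2"
    using assms by (simp add: field_simps power2_eq_square)
  show "(t - 1)^2 / (2 * max t 1) \<le> t - 1 - ln t"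
    using half ln_le_half_diff_inverse[of t] ln_taylor2_gap_antimono[of t 1] assms
    by (cases "1 \<le> t") auto
  show "t - 1 - ln t \<le> (t - 1)^2 / (2 * min t 1)"
    using half ln_ge_half_diff_inverse[of t] ln_taylor2_gap_antimono[of 1 t] assms
    by (cases "1 \<le> t") auto
qed

lemma ln_ratio_deviation_bounds:
  fixes z g :: real assumes "0 < z" "0 < g"
  shows "(z - g)^2 / (2 * max z g) \<le> z - g - g * ln (z / g)"
    and "z - g - g * ln (z / g) \<le> (z - g)^2 / (2 * min z g)"
proof -
  have scale: "g * ((z/g - 1)^2 / (2 * (c / g))) = (z - g)^2 / (2 * c)" if "0 < c" for c
    using assms that by (simp add: field_simps power2_eq_square)
  have max: "max (z/g) 1 = max z g / g" and min: "min (z/g) 1 = min z g / g"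
    using assms by (auto simp: max_def min_def field_simps)
  have "(z - g)^2 / (2 * max z g) = g * ((z/g - 1)^2 / (2 * max (z/g) 1))"
    using scale[of "max z g"] assms by (simp add: max)
  also have "\<dots> \<le> g * (z/g - 1 - ln (z/g))"
    using assms by (intro mult_left_mono ln_deviation_bounds) auto
  also have "\<dots> = z - g - g * ln (z / g)"
    using assms by (simp add: algebra_simps)
  finally show "(z - g)^2 / (2 * max z g) \<le> z - g - g * ln (z / g)" .
  have "z - g - g * ln (z / g) = g * (z/g - 1 - ln (z/g))"
    using assms by (simp add: algebra_simps)
  also have "\<dots> \<le> g * ((z/g - 1)^2 / (2 * min (z/g) 1))"
    using assms by (intro mult_left_mono ln_deviation_bounds) auto
  also have "\<dots> = (z - g)^2 / (2 * min z g)"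
    using scale[of "min z g"] assms by (simp add: min)
  finally show "z - g - g * ln (z / g) \<le> (z - g)^2 / (2 * min z g)" .
qed

lemma sum_eq_AM: "n \<ge> 1 \<Longrightarrow> (\<Sum>i=1..n. z i) = real n * AM n z"
  by (simp add: AM_def)

lemma AM_one_minus: "n \<ge> 1 \<Longrightarrow> AM n (\<lambda>i. 1 - z i) = 1 - AM n z"
  by (simp add: AM_def sum_subtractf diff_divide_distrib)

lemma AM_const:
  assumes "n \<ge> 1" "\<And>i. i \<in> {1..n} \<Longrightarrow> z i = c"
  shows "AM n z = c"
  using assms by (simp add: AM_def)

lemma GM_pos:
  assumes "\<And>i. i \<in> {1..n} \<Longrightarrow> 0 < z i"
  shows "0 < GM n z"
  unfolding GM_def by (intro prod_pos) (simp add: assms[THEN order.strict_implies_not_eq, symmetric])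

lemma ln_GM:
  assumes "\<And>i. i \<in> {1..n} \<Longrightarrow> 0 < z i"
  shows "ln (GM n z) = (\<Sum>i=1..n. ln (z i)) / real n"
proof -
  have "ln (GM n z) = (\<Sum>i=1..n. ln (z i powr (1 / real n)))"
    unfolding GM_def by (subst ln_prod) (simp_all add: assms[THEN order.strict_implies_not_eq, symmetric])
  also have "\<dots> = (\<Sum>i=1..n. ln (z i)) / real n"
    using assms by (simp add: ln_powr sum_divide_distrib)
  finally show ?thesis .
qed

lemma GM_mono:
  assumes "\<And>i. i \<in> {1..n} \<Longrightarrow> 0 \<le> z i \<and> z i \<le> w i"
  shows "GM n z \<le> GM n w"
  unfolding GM_def using assms by (intro prod_mono) (auto intro: powr_mono2)

lemma GM_const:
  assumes "n \<ge> 1" "0 < c" "\<And>i. i \<in> {1..n} \<Longrightarrow> z i = c"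
  shows "GM n z = c"
proof -
  have "GM n z = (c powr (1 / real n)) ^ n"
    using assms(3) by (simp add: GM_def)
  also have "\<dots> = c"
    using assms(1,2) by (simp add: powr_realpow[symmetric] powr_powr)
  finally show ?thesis .
qed

definition sum_sq_dev :: "nat \<Rightarrow> (nat \<Rightarrow> real) \<Rightarrow> real" where
  "sum_sq_dev n z = (\<Sum>i=1..n. (z i - AM n z)^2)"

lemma sum_sq_dev_one_minus: "n \<ge> 1 \<Longrightarrow> sum_sq_dev n (\<lambda>i. 1 - z i) = sum_sq_dev n z"
  by (simp add: sum_sq_dev_def AM_one_minus power2_commute)

lemma sum_sq_dev_le:
  assumes "n \<ge> 1"
  shows "sum_sq_dev n z \<le> (\<Sum>i=1..n. (z i - c)^2)"
proof -
  have "(\<Sum>i=1..n. (z i - c)^2)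
      = sum_sq_dev n z + 2 * (AM n z - c) * ((\<Sum>i=1..n. z i) - real n * AM n z) + real n * (AM n z - c)^2"
    by (simp add: sum_sq_dev_def power2_eq_square algebra_simps sum.distrib sum_subtractf
        sum_distrib_left sum_distrib_right)
  then show ?thesis
    using sum_eq_AM[OF assms, of z] by simp
qed

lemma sum_sq_dev_pos:
  assumes "\<not> (\<forall>i\<in>{1..n}. \<forall>j\<in>{1..n}. z i = z j)"
  shows "0 < sum_sq_dev n z"
proof -
  obtain i where "i \<in> {1..n}" "z i \<noteq> AM n z"
    using assms by metis
  then show ?thesis
    unfolding sum_sq_dev_def by (intro sum_pos2[of _ i]) auto
qed

lemma sum_ln_divergence:
  assumes "n \<ge> 1" "\<And>i. i \<in> {1..n} \<Longrightarrow> 0 < z i" "0 < c"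
  shows "(\<Sum>i=1..n. z i - c - c * ln (z i / c)) = real n * (AM n z - c - c * (ln (GM n z) - ln c))"
proof -
  have "(\<Sum>i=1..n. z i - c - c * ln (z i / c)) = (\<Sum>i=1..n. z i - c - c * ln (z i) + c * ln c)"
  proof (intro sum.cong refl)
    fix i assume "i \<in> {1..n}"
    then show "z i - c - c * ln (z i / c) = z i - c - c * ln (z i) + c * ln c"
      using assms(2)[of i] assms(3) by (simp add: ln_div algebra_simps)
  qed
  also have "\<dots> = (\<Sum>i=1..n. z i) - real n * c - c * (\<Sum>i=1..n. ln (z i)) + real n * (c * ln c)"
    by (simp add: sum.distrib sum_subtractf sum_distrib_left)
  also have "\<dots> = real n * (AM n z - c - c * (ln (GM n z) - ln c))"
    using sum_eq_AM[OF assms(1), of z] ln_GM[OF assms(2)] assms(1) by (simp add: algebra_simps)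
  finally show ?thesis .
qed

lemma AM_minus_GM_lower_bound:
  assumes n: "n \<ge> 1" and z: "\<And>i. i \<in> {1..n} \<Longrightarrow> 0 < z i \<and> z i \<le> M"
  shows "sum_sq_dev n z / (2 * M * real n) \<le> AM n z - GM n z"
proof -
  define G where "G = GM n z"
  have M: "0 < M"
    using z[of 1] n by auto
  have "GM n z \<le> GM n (\<lambda>_. M)"
    using z by (intro GM_mono) (simp add: less_imp_le)
  then have G: "0 < G" "G \<le> M"
    using GM_pos[of n z] GM_const[OF n M, of "\<lambda>_. M"] z unfolding G_def by auto
  have "sum_sq_dev n z / (2 * M) \<le> (\<Sum>i=1..n. (z i - G)^2) / (2 * M)"
    using sum_sq_dev_le[OF n, of z G] M by (simp add: divide_right_mono)
  also have "\<dots> = (\<Sum>i=1..n. (z i - G)^2 / (2 * M))"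
    by (simp add: sum_divide_distrib)
  also have "\<dots> \<le> (\<Sum>i=1..n. (z i - G)^2 / (2 * max (z i) G))"
    using z G by (intro sum_mono divide_left_mono) auto
  also have "\<dots> \<le> (\<Sum>i=1..n. z i - G - G * ln (z i / G))"
    using z G by (intro sum_mono ln_ratio_deviation_bounds) auto
  also have "\<dots> = real n * (AM n z - G)"
    using sum_ln_divergence[OF n _ G(1), of z] z unfolding G_def by simp
  finally show ?thesis
    using n M unfolding G_def by (simp add: field_simps)
qed

lemma AM_minus_GM_upper_bound:
  assumes n: "n \<ge> 1" and m: "0 < m" and z: "\<And>i. i \<in> {1..n} \<Longrightarrow> m \<le> z i"
  shows "AM n z - GM n z \<le> sum_sq_dev n z / (2 * m * real n)"
proof -
  define A where "A = AM n z"
  have z_pos: "\<And>i. i \<in> {1..n} \<Longrightarrow> 0 < z i"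
    using z m by fastforce
  have "real n * m \<le> real n * A"
    using sum_mono[of "{1..n}" "\<lambda>_. m" z] z sum_eq_AM[OF n, of z] unfolding A_def by simp
  then have A: "m \<le> A" "0 < A"
    using n m by auto
  have G: "0 < GM n z"
    using GM_pos z_pos by blast
  have "real n * (A - GM n z) \<le> real n * (A - A - A * (ln (GM n z) - ln A))"
    using ln_diff_le[OF G A(2)] A(2) n by (intro mult_left_mono) (auto simp: field_simps)
  also have "\<dots> = (\<Sum>i=1..n. z i - A - A * ln (z i / A))"
    using sum_ln_divergence[OF n z_pos A(2)] unfolding A_def by simp
  also have "\<dots> \<le> (\<Sum>i=1..n. (z i - A)^2 / (2 * min (z i) A))"
    using z_pos A by (intro sum_mono ln_ratio_deviation_bounds) auto
  also have "\<dots> \<le> (\<Sum>i=1..n. (z i - A)^2 / (2 * m))"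
  proof (intro sum_mono divide_left_mono)
    fix i assume "i \<in> {1..n}"
    then have "m \<le> min (z i) A"
      using z A by simp
    then show "0 < 2 * min (z i) A * (2 * m)" "2 * m \<le> 2 * min (z i) A"
      using m by simp_all
  qed simp
  also have "\<dots> = sum_sq_dev n z / (2 * m)"
    unfolding sum_sq_dev_def A_def by (simp add: sum_divide_distrib)
  finally show ?thesis
    using n m unfolding A_def by (simp add: field_simps)
qed

lemma ln_chord_slope_decreasing:
  fixes a b c :: real assumes "0 < a" "a < b" "b < c"
  shows "(ln c - ln a) / (c - a) < (ln b - ln a) / (b - a)"
    and "(ln c - ln b) / (c - b) < (ln c - ln a) / (c - a)"
proof -
  define s1 where "s1 = (ln b - ln a) / (b - a)"
  define s2 where "s2 = (ln c - ln b) / (c - b)"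
  have "ln (a/b) < a/b - 1" "ln (c/b) < c/b - 1"
    using ln_le_minus_one[of "a/b"] ln_eq_minus_one[of "a/b"]
      ln_le_minus_one[of "c/b"] ln_eq_minus_one[of "c/b"] assms by fastforce+
  then have "1/b < s1" "s2 < 1/b"
    using assms unfolding s1_def s2_def by (simp_all add: ln_div field_simps)
  then have "s2 * (c - b) < s1 * (c - b)" "s2 * (b - a) < s1 * (b - a)"
    using assms by (simp_all add: mult_strict_right_mono)
  moreover have "ln c - ln a = s1 * (b - a) + s2 * (c - b)"
    using assms unfolding s1_def s2_def by simp
  ultimately have "ln c - ln a < s1 * (c - a)" "s2 * (c - a) < ln c - ln a"
    by (simp_all add: algebra_simps)
  then show "(ln c - ln a) / (c - a) < s1" "s2 < (ln c - ln a) / (c - a)"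
    using assms by (simp_all add: field_simps)
qed

lemma plus_one_times_ln_div_minus_one_strict_mono:
  fixes s t :: real assumes "1 < s" "s < t"
  shows "(s + 1) * ln s / (s - 1) < (t + 1) * ln t / (t - 1)"
proof (rule DERIV_pos_imp_increasing[OF assms(2)])
  fix u :: real assume "s \<le> u" "u \<le> t"
  then have u: "1 < u" using assms by simp
  have "DERIV (\<lambda>u. (u + 1) * ln u / (u - 1)) u :> ((u - 1/u) - 2 * ln u) / (u - 1)^2"
    using u by (auto intro!: derivative_eq_intros simp: field_simps power2_eq_square)
  moreover have "((u - 1/u) - 2 * ln u) / (u - 1)^2 > 0"
    using ln_less_half_diff_inverse[OF u] u by simp
  ultimately show "\<exists>y. DERIV (\<lambda>u. (u + 1) * ln u / (u - 1)) u :> y \<and> y > 0" by blast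
qed

lemma ratio_powr_sum_less:
  fixes A G A' G' :: real
  assumes "0 < G" "G < A" "A < A'" "0 < G'" "G' < A'" "A' - G' \<le> A - G"
  shows "(A'/G') powr (A' + G') < (A/G) powr (A + G)"
proof -
  define T T' where "T = A/G" and "T' = A'/G'"
  have T: "1 < T" "1 < T'"
    using assms unfolding T_def T'_def by simp_all
  have "1 - 1/T' = (A' - G') / A'" "1 - 1/T = (A - G) / A"
    using assms unfolding T_def T'_def by (simp_all add: field_simps)
  moreover have "(A' - G') / A' \<le> (A - G) / A'"
    using assms by (simp add: divide_right_mono)
  moreover have "(A - G) / A' < (A - G) / A"
    using assms by (simp add: divide_strict_left_mono)
  ultimately have "1/T < 1/T'"
    by linarith
  then have "T' < T"
    using T by (simp add: field_simps)
  have ln_weighted: "(a + g) * ln (a/g) = (a - g) * ((a/g + 1) * ln (a/g) / (a/g - 1))"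
    if "0 < g" "g < a" for a g :: real
    using that by (simp add: field_simps)
  have "(A' + G') * ln T' = (A' - G') * ((T' + 1) * ln T' / (T' - 1))"
    unfolding T'_def using ln_weighted[of G' A'] assms by simp
  also have "\<dots> \<le> (A - G) * ((T' + 1) * ln T' / (T' - 1))"
    using assms T by (intro mult_right_mono) simp_all
  also have "\<dots> < (A - G) * ((T + 1) * ln T / (T - 1))"
    using plus_one_times_ln_div_minus_one_strict_mono[OF T(2) \<open>T' < T\<close>] assms
    by (intro mult_strict_left_mono) simp_all
  also have "\<dots> = (A + G) * ln T"
    unfolding T_def using ln_weighted[of G A] assms by simp
  finally show ?thesis
    using assms unfolding T_def T'_def by (simp add: powr_def mult.commute)
qed

lemma ratio_powr_diff_less:
  fixes A G A' G' :: real
  assumes "0 < G" "G \<le> G'" "G < A" "A < A'" "G' < A'"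
  shows "(A'/G') powr (A - G) < (A/G) powr (A' - G')"
proof -
  have "(ln A' - ln G') / (A' - G') \<le> (ln A' - ln G) / (A' - G)"
    using ln_chord_slope_decreasing(2)[of G G' A'] assms by (cases "G = G'") auto
  also have "\<dots> < (ln A - ln G) / (A - G)"
    using ln_chord_slope_decreasing(1)[of G A A'] assms by simp
  finally have "(A - G) * ln (A'/G') < (A' - G') * ln (A/G)"
    using assms by (simp add: ln_div field_simps)
  then show ?thesis
    using assms by (simp add: powr_def mult.commute)
qed

lemma one_minus_means_comparison:
  assumes n: "n \<ge> 1" and x: "\<And>i. i \<in> {1..n} \<Longrightarrow> 0 < x i \<and> x i \<le> 1/2"
    and nonconst: "\<not> (\<forall>i\<in>{1..n}. \<forall>j\<in>{1..n}. x i = x j)"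
  shows "0 < GM n x" "GM n x < AM n x" "AM n x < AM n (\<lambda>i. 1 - x i)"
    and "GM n x \<le> GM n (\<lambda>i. 1 - x i)" "GM n (\<lambda>i. 1 - x i) < AM n (\<lambda>i. 1 - x i)"
    and "AM n (\<lambda>i. 1 - x i) - GM n (\<lambda>i. 1 - x i) \<le> AM n x - GM n x"
proof -
  define y where "y = (\<lambda>i. 1 - x i)"
  have y: "\<And>i. i \<in> {1..n} \<Longrightarrow> 1/2 \<le> y i \<and> y i \<le> 1"
    using x unfolding y_def by fastforce
  have V: "0 < sum_sq_dev n x" "sum_sq_dev n y = sum_sq_dev n x"
    using sum_sq_dev_pos[OF nonconst] sum_sq_dev_one_minus[OF n] unfolding y_def by auto
  have "sum_sq_dev n x / real n \<le> AM n x - GM n x"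
    using AM_minus_GM_lower_bound[OF n x] by simp
  moreover have "sum_sq_dev n x / (2 * real n) \<le> AM n y - GM n y"
    using AM_minus_GM_lower_bound[OF n, of y 1] y V by fastforce
  moreover have "AM n y - GM n y \<le> sum_sq_dev n x / real n"
    using AM_minus_GM_upper_bound[OF n, of "1/2" y] y V by simp
  moreover have "0 < sum_sq_dev n x / (2 * real n)"
    using V n by simp
  ultimately show "GM n x < AM n x" "GM n y < AM n y" "AM n y - GM n y \<le> AM n x - GM n x"
    by linarith+
  show "0 < GM n x"
    using GM_pos x by blast
  show "GM n x \<le> GM n y"
    using x unfolding y_def by (intro GM_mono) fastforce
  obtain k where k: "k \<in> {1..n}" "x k \<noteq> 1/2"
    using nonconst by metis
  have "(\<Sum>i=1..n. x i) < (\<Sum>i=1..n. 1/2)"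
    using x k by (intro sum_strict_mono_ex1) (auto simp: order.strict_iff_order)
  then have "AM n x < 1/2"
    using sum_eq_AM[OF n, of x] n by simp
  then show "AM n x < AM n y"
    unfolding y_def AM_one_minus[OF n] by simp
qed

theorem mainTheorem7:
  fixes n :: nat and x :: "nat \<Rightarrow> real"
  assumes "n \<ge> 1"
    and "\<And>i. i \<in> {1..n} \<Longrightarrow> 0 < x i \<and> x i \<le> 1/2"
  shows "((AM n (\<lambda>i. 1 - x i) / GM n (\<lambda>i. 1 - x i)) powr (AM n (\<lambda>i. 1 - x i) + GM n (\<lambda>i. 1 - x i))
           \<le> (AM n x / GM n x) powr (AM n x + GM n x)) \<and>
         ((AM n (\<lambda>i. 1 - x i) / GM n (\<lambda>i. 1 - x i)) powr (AM n (\<lambda>i. 1 - x i) + GM n (\<lambda>i. 1 - x i))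
           = (AM n x / GM n x) powr (AM n x + GM n x)
         \<longleftrightarrow> (\<forall>i\<in>{1..n}. \<forall>j\<in>{1..n}. x i = x j)) \<and>
         ((AM n (\<lambda>i. 1 - x i) / GM n (\<lambda>i. 1 - x i)) powr (AM n x - GM n x)
           \<le> (AM n x / GM n x) powr (AM n (\<lambda>i. 1 - x i) - GM n (\<lambda>i. 1 - x i))) \<and>
         ((AM n (\<lambda>i. 1 - x i) / GM n (\<lambda>i. 1 - x i)) powr (AM n x - GM n x)
           = (AM n x / GM n x) powr (AM n (\<lambda>i. 1 - x i) - GM n (\<lambda>i. 1 - x i))
         \<longleftrightarrow> (\<forall>i\<in>{1..n}. \<forall>j\<in>{1..n}. x i = x j))"
proof (cases "\<forall>i\<in>{1..n}. \<forall>j\<in>{1..n}. x i = x j")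
  case True
  have one: "1 \<in> {1..n}"
    using assms(1) by simp
  then have const: "\<And>i. i \<in> {1..n} \<Longrightarrow> x i = x 1"
    using True by blast
  then have const': "\<And>i. i \<in> {1..n} \<Longrightarrow> 1 - x i = 1 - x 1"
    by metis
  have "0 < x 1" "0 < 1 - x 1"
    using assms(2)[OF one] by auto
  then have "AM n x / GM n x = 1" "AM n (\<lambda>i. 1 - x i) / GM n (\<lambda>i. 1 - x i) = 1"
    using AM_const[OF assms(1) const] GM_const[OF assms(1) _ const]
      AM_const[OF assms(1) const'] GM_const[OF assms(1) _ const'] by simp_all
  then show ?thesis
    unfolding eqTrueI[OF True] by simp
next
  case False
  note means = one_minus_means_comparison[OF assms False]
  have "0 < GM n (\<lambda>i. 1 - x i)"
    using means(1,4) by linarith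
  then show ?thesis
    using ratio_powr_sum_less[OF means(1,2,3) _ means(5,6)] ratio_powr_diff_less[OF means(1,4,2,3,5)]
      False by (simp add: order.strict_iff_order)
qed

end
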